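(* Let $M$ be a Kripke model with yesterday and $U$ an action model over $L_{\mathsf{DETL}}$, and suppose $M,w^*\models\mathrm{pre}^U(s^* )$ for some $w^*\in W^M$ and $s^*\in W^U$ (so $M[U]$ is a Kripke model). Then: (a) If $M$ satisfies persistence of facts, then so does $M[U]$. (b) If $M$ and $U$ are depth-defined, then so is $M[U]$. (c) If $M$ and $U$ satisfy knowledge of the past and $U$ is history preserving, then $M[U]$ satisfies knowledge of the past. (d) If $M$ satisfies knowledge of the initial time and $U$ is history preserving, then $M[U]$ satisfies knowledge of the initial time. (e) If $M$ and $U$ satisfy uniqueness of the past, then so does $M[U]$. (f) If $M$ and $U$ satisfy perfect recall and $U$ is history preserving, then $M[U]$ satisfies perfect recall. (g) If $M$ and $U$ are synchronous and $U$ is history preserving, then $M[U]$ is synchronous.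
   Context: Fix a nonempty finite set $\mathsf{Agt}$ of agents and a nonempty set $\mathsf{Prop}$ of letters. A Kripke model (with yesterday) is $M=(W^M,(\to^M_a)_{a\in\mathsf{Agt}},\leadsto^M,V^M)$ with $W^M$ a nonempty set, binary relations $\to^M_a,\leadsto^M$ on $W^M$ ($w'\leadsto w$: $w'$ is a yesterday of $w$), $V^M:\mathsf{Prop}\to\mathcal P(W^M)$. An action model over a set $F$ of formulas is $U=(W^U,(\to^U_a)_a,\leadsto^U,\mathrm{pre}^U)$ with $W^U$ nonempty finite, binary relations $\to^U_a,\leadsto^U$, and $\mathrm{pre}^U:W^U\to F$. An event $s$ is a past state if there is no $s'\leadsto^Us$. $L_{\mathsf{DETL}}$ (with action models over it) is given by $\varphi::=p\mid\neg\varphi\mid\varphi\wedge\varphi\mid\Box_a\varphi\mid[Y]\varphi\mid[U,s]\varphi$. Semantics: Boolean standard; $M,w\models\Box_a\varphi$ iff $\varphi$ holds at all $v$ with $w\to^M_av$; $M,w\models[Y]\varphi$ iff $\varphi$ holds at all $v\leadsto^Mw$; $M,w\models[U,s]\varphi$ iff $M,w\models\mathrm{pre}^U(s)$ implies $M[U],(w,s)\models\varphi$. The product $M[U]$ has worlds $\{(v,t)\in W^M\times W^U:M,v\models\mathrm{pre}^U(t)\}$, $(v,t)\to_a(v',t')$ iff $v\to^M_av'$ and $t\to^U_at'$, $(v',t')\leadsto(v,t)$ iff ($v'\leadsto^Mv$, $t'=t$, $t$ a past state) or ($v'=v$, $t'\leadsto^Ut$), and $(v,t)\in V(p)$ iff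 $v\in V^M(p)$. $\models\varphi$ means truth at all pointed Kripke models. A progression is a finite nonempty sequence $x_0,\dots,x_n$ with $x_i\leadsto x_{i+1}$, of length $n$; a history is a progression that cannot be extended by adding elements at the beginning. $\mathrm{depth}(x)$ is the maximum length of a history ending at $x$ if the maximum exists, else $\infty$. The following apply to Kripke models or action models (with worlds/events $w,v,\dots$), except where noted: Persistence of facts (Kripke models only): $w\leadsto w'$ implies ($w\in V(p)\iff w'\in V(p)$) for all $p$. Depth-definedness: $\mathrm{depth}(w)\ne\infty$ for all $w$. Knowledge of the past: $w'\leadsto w\to_a v$ implies there is $v'$ with $v'\leadsto v$. Knowledge of the initial time: if $w\to_av$ and there is no $w'\leadsto w$ then there is no $v'\leadsto v$. Uniqueness of the past: $w'\leadsto w$ and $w''\leadsto w$ imply $w'=w''$. Perfect recall: $w\leadsto v\to_a v'$ implies there is $w'$ with $w\to_aw'\leadsto v'$. Synchronicity: the structure is depth-defined and $w\to_aw'$ implies $\mathrm{depth}(w)=\mathrm{depth}(w')$. An epistemic past state of $U$ is a past state $s$ with $\models\mathrm{pre}^U(s)$ whose only outgoing epistemic arrows are the reflexive arrows $s\to^U_as$ for each $a\in\mathsf{Agt}$. History preservation (action models only): $s'\leadsto^Us$ implies $\models\mathrm{pre}^U(s)\to\mathrm{pre}^U(s')$, and every past state of $U$ is an epistemic past state. *)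

theory Defs
  imports Main "HOL-Library.Extended_Nat"
begin

text \<open>Agents are the elements of a finite (hence nonempty) type 'ag; letters are the
elements of a (nonempty) type 'p.  The events of an action model are natural numbers
(any nonempty finite set of events can be renamed into nat).  An action model embedded in a
formula [U,s]phi is given by its components: event set, epistemic relations, yesterday
relation and precondition map.\<close>

datatype ('p, 'ag) fm =
    Atom 'p
  | Neg "('p, 'ag) fm"
  | Conj "('p, 'ag) fm" "('p, 'ag) fm"
  | Box 'ag "('p, 'ag) fm"
  | Yest "('p, 'ag) fm"
  | Upd "nat set" "'ag \<Rightarrow> nat \<Rightarrow> nat \<Rightarrow> bool" "nat \<Rightarrow> nat \<Rightarrow> bool"
        "nat \<Rightarrow> ('p, 'ag) fm" nat "('p, 'ag) fm"

definition Imp :: "('p, 'ag) fm \<Rightarrow> ('p, 'ag) fm \<Rightarrow> ('p, 'ag) fm" where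
  "Imp \<phi> \<psi> = Neg (Conj \<phi> (Neg \<psi>))"

record ('w, 'ag, 'p) kmodel =
  worlds :: "'w set"
  rel    :: "'ag \<Rightarrow> 'w \<Rightarrow> 'w \<Rightarrow> bool"
  yrel   :: "'w \<Rightarrow> 'w \<Rightarrow> bool"          (* yrel w' w : w' is a yesterday of w *)
  val    :: "'p \<Rightarrow> 'w set"

definition kripke :: "('w, 'ag, 'p) kmodel \<Rightarrow> bool" where
  "kripke M \<longleftrightarrow> worlds M \<noteq> {}
     \<and> (\<forall>a u v. rel M a u v \<longrightarrow> u \<in> worlds M \<and> v \<in> worlds M)
     \<and> (\<forall>u v. yrel M u v \<longrightarrow> u \<in> worlds M \<and> v \<in> worlds M)
     \<and> (\<forall>p. val M p \<subseteq> worlds M)"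

record ('ag, 'p) amodel =
  events :: "nat set"
  arel   :: "'ag \<Rightarrow> nat \<Rightarrow> nat \<Rightarrow> bool"
  ayrel  :: "nat \<Rightarrow> nat \<Rightarrow> bool"
  pre    :: "nat \<Rightarrow> ('p, 'ag) fm"

definition past_state :: "(nat \<Rightarrow> nat \<Rightarrow> bool) \<Rightarrow> nat \<Rightarrow> bool" where
  "past_state Y s \<longleftrightarrow> \<not> (\<exists>s'. Y s' s)"

text \<open>Product update M[U], with worlds the pairs (v,t).  The argument P v t stands for
  "M,v satisfies pre(t)".\<close>

definition prod_gen ::
  "('w, 'ag, 'p) kmodel \<Rightarrow> ('w \<Rightarrow> nat \<Rightarrow> bool) \<Rightarrow> nat set \<Rightarrow> ('ag \<Rightarrow> nat \<Rightarrow> nat \<Rightarrow> bool)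
    \<Rightarrow> (nat \<Rightarrow> nat \<Rightarrow> bool) \<Rightarrow> ('w \<times> nat, 'ag, 'p) kmodel" where
  "prod_gen M P E R Y =
    (let Wp = {(v, t). v \<in> worlds M \<and> t \<in> E \<and> P v t} in
    \<lparr> worlds = Wp,
      rel = (\<lambda>a x y. x \<in> Wp \<and> y \<in> Wp \<and> rel M a (fst x) (fst y) \<and> R a (snd x) (snd y)),
      yrel = (\<lambda>x' x. x' \<in> Wp \<and> x \<in> Wp \<and>
                ((yrel M (fst x') (fst x) \<and> snd x' = snd x \<and> past_state Y (snd x))
                 \<or> (fst x' = fst x \<and> Y (snd x') (snd x)))),
      val = (\<lambda>p. {x \<in> Wp. fst x \<in> val M p}) \<rparr>)"

text \<open>To keep the semantics within one type, nested products are re-encoded injectively: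
  worlds of type 'w \<times> nat list, the product world ((a,l),t) being encoded as (a, l @ [t]).\<close>

definition emb :: "(('w \<times> nat list) \<times> nat, 'ag, 'p) kmodel \<Rightarrow> ('w \<times> nat list, 'ag, 'p) kmodel" where
  "emb N =
    (let f = (\<lambda>((a, l), t). (a, l @ [t])) in
    \<lparr> worlds = f ` worlds N,
      rel = (\<lambda>ag x y. \<exists>u v. x = f u \<and> y = f v \<and> rel N ag u v),
      yrel = (\<lambda>x y. \<exists>u v. x = f u \<and> y = f v \<and> yrel N u v),
      val = (\<lambda>p. f ` val N p) \<rparr>)"

primrec sat :: "('p, 'ag) fm \<Rightarrow> ('w \<times> nat list, 'ag, 'p) kmodel \<Rightarrow> 'w \<times> nat list \<Rightarrow> bool" where
  "sat (Atom p) M w = (w \<in> val M p)"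
| "sat (Neg \<phi>) M w = (\<not> sat \<phi> M w)"
| "sat (Conj \<phi> \<psi>) M w = (sat \<phi> M w \<and> sat \<psi> M w)"
| "sat (Box a \<phi>) M w = (\<forall>v. rel M a w v \<longrightarrow> sat \<phi> M v)"
| "sat (Yest \<phi>) M w = (\<forall>v. yrel M v w \<longrightarrow> sat \<phi> M v)"
| "sat (Upd E R Y pr s \<phi>) M w =
     (sat (pr s) M w \<longrightarrow>
        sat \<phi> (emb (prod_gen M (\<lambda>v t. sat (pr t) M v) E R Y)) (fst w, snd w @ [s]))"

definition valid :: "'w itself \<Rightarrow> ('p, 'ag) fm \<Rightarrow> bool" where
  "valid (_ :: 'w itself) \<phi> \<longleftrightarrow>
     (\<forall>(M :: ('w \<times> nat list, 'ag, 'p) kmodel) w. kripke M \<and> w \<in> worlds M \<longrightarrow> sat \<phi> M w)"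

primrec wf_fm :: "('p, 'ag) fm \<Rightarrow> bool" where
  "wf_fm (Atom p) = True"
| "wf_fm (Neg \<phi>) = wf_fm \<phi>"
| "wf_fm (Conj \<phi> \<psi>) = (wf_fm \<phi> \<and> wf_fm \<psi>)"
| "wf_fm (Box a \<phi>) = wf_fm \<phi>"
| "wf_fm (Yest \<phi>) = wf_fm \<phi>"
| "wf_fm (Upd E R Y pr s \<phi>) =
     (finite E \<and> E \<noteq> {} \<and> s \<in> E
      \<and> (\<forall>a u v. R a u v \<longrightarrow> u \<in> E \<and> v \<in> E)
      \<and> (\<forall>u v. Y u v \<longrightarrow> u \<in> E \<and> v \<in> E)
      \<and> (\<forall>t\<in>E. wf_fm (pr t)) \<and> wf_fm \<phi>)"

definition action_model :: "('ag, 'p) amodel \<Rightarrow> bool" where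
  "action_model U \<longleftrightarrow> finite (events U) \<and> events U \<noteq> {}
     \<and> (\<forall>a u v. arel U a u v \<longrightarrow> u \<in> events U \<and> v \<in> events U)
     \<and> (\<forall>u v. ayrel U u v \<longrightarrow> u \<in> events U \<and> v \<in> events U)
     \<and> (\<forall>t\<in>events U. wf_fm (pre U t))"

definition product :: "('w \<times> nat list, 'ag, 'p) kmodel \<Rightarrow> ('ag, 'p) amodel
     \<Rightarrow> (('w \<times> nat list) \<times> nat, 'ag, 'p) kmodel" where
  "product M U = prod_gen M (\<lambda>v t. sat (pre U t) M v) (events U) (arel U) (ayrel U)"

definition progression :: "('a \<Rightarrow> 'a \<Rightarrow> bool) \<Rightarrow> 'a list \<Rightarrow> bool" where
  "progression Y xs \<longleftrightarrow> xs \<noteq> [] \<and> (\<forall>i. Suc i < length xs \<longrightarrow> Y (xs ! i) (xs ! Suc i))"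

definition history :: "('a \<Rightarrow> 'a \<Rightarrow> bool) \<Rightarrow> 'a list \<Rightarrow> bool" where
  "history Y xs \<longleftrightarrow> progression Y xs \<and> \<not> (\<exists>y. Y y (hd xs))"

definition hist_lengths :: "('a \<Rightarrow> 'a \<Rightarrow> bool) \<Rightarrow> 'a \<Rightarrow> nat set" where
  "hist_lengths Y x = {length xs - 1 | xs. history Y xs \<and> last xs = x}"

definition depth :: "('a \<Rightarrow> 'a \<Rightarrow> bool) \<Rightarrow> 'a \<Rightarrow> enat" where
  "depth Y x = (if hist_lengths Y x \<noteq> {} \<and> finite (hist_lengths Y x)
                then enat (Max (hist_lengths Y x)) else \<infinity>)"

definition persistence :: "('w, 'ag, 'p) kmodel \<Rightarrow> bool" where
  "persistence M \<longleftrightarrow> (\<forall>w w' p. yrel M w w' \<longrightarrow> (w \<in> val M p \<longleftrightarrow> w' \<in> val M p))"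

definition depth_defined :: "'a set \<Rightarrow> ('a \<Rightarrow> 'a \<Rightarrow> bool) \<Rightarrow> bool" where
  "depth_defined S Y \<longleftrightarrow> (\<forall>x\<in>S. depth Y x \<noteq> \<infinity>)"

definition knowledge_past :: "'a set \<Rightarrow> ('ag \<Rightarrow> 'a \<Rightarrow> 'a \<Rightarrow> bool) \<Rightarrow> ('a \<Rightarrow> 'a \<Rightarrow> bool) \<Rightarrow> bool" where
  "knowledge_past S R Y \<longleftrightarrow>
     (\<forall>a w w' v. w \<in> S \<and> w' \<in> S \<and> v \<in> S \<and> Y w' w \<and> R a w v \<longrightarrow> (\<exists>v'\<in>S. Y v' v))"

definition knowledge_initial :: "'a set \<Rightarrow> ('ag \<Rightarrow> 'a \<Rightarrow> 'a \<Rightarrow> bool) \<Rightarrow> ('a \<Rightarrow> 'a \<Rightarrow> bool) \<Rightarrow> bool" where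
  "knowledge_initial S R Y \<longleftrightarrow>
     (\<forall>a w v. w \<in> S \<and> v \<in> S \<and> R a w v \<and> \<not> (\<exists>w'\<in>S. Y w' w) \<longrightarrow> \<not> (\<exists>v'\<in>S. Y v' v))"

definition unique_past :: "'a set \<Rightarrow> ('a \<Rightarrow> 'a \<Rightarrow> bool) \<Rightarrow> bool" where
  "unique_past S Y \<longleftrightarrow>
     (\<forall>w w' w''. w \<in> S \<and> w' \<in> S \<and> w'' \<in> S \<and> Y w' w \<and> Y w'' w \<longrightarrow> w' = w'')"

definition perfect_recall :: "'a set \<Rightarrow> ('ag \<Rightarrow> 'a \<Rightarrow> 'a \<Rightarrow> bool) \<Rightarrow> ('a \<Rightarrow> 'a \<Rightarrow> bool) \<Rightarrow> bool" where
  "perfect_recall S R Y \<longleftrightarrow>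
     (\<forall>a w v v'. w \<in> S \<and> v \<in> S \<and> v' \<in> S \<and> Y w v \<and> R a v v' \<longrightarrow> (\<exists>w'\<in>S. R a w w' \<and> Y w' v'))"

definition synchronous :: "'a set \<Rightarrow> ('ag \<Rightarrow> 'a \<Rightarrow> 'a \<Rightarrow> bool) \<Rightarrow> ('a \<Rightarrow> 'a \<Rightarrow> bool) \<Rightarrow> bool" where
  "synchronous S R Y \<longleftrightarrow> depth_defined S Y \<and>
     (\<forall>a w w'. w \<in> S \<and> w' \<in> S \<and> R a w w' \<longrightarrow> depth Y w = depth Y w')"

text \<open>Epistemic past states and history preservation; validity is taken over models whose
  world type is the one given by the type argument.\<close>

definition epistemic_past_state :: "'w itself \<Rightarrow> ('ag, 'p) amodel \<Rightarrow> nat \<Rightarrow> bool" where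
  "epistemic_past_state T U s \<longleftrightarrow> s \<in> events U \<and> past_state (ayrel U) s \<and> valid T (pre U s)
     \<and> (\<forall>a t. arel U a s t \<longleftrightarrow> t = s)"

definition history_preserving :: "'w itself \<Rightarrow> ('ag, 'p) amodel \<Rightarrow> bool" where
  "history_preserving T U \<longleftrightarrow>
     (\<forall>s s'. ayrel U s' s \<longrightarrow> valid T (Imp (pre U s) (pre U s')))
     \<and> (\<forall>s\<in>events U. past_state (ayrel U) s \<longrightarrow> epistemic_past_state T U s)"

end

theory Submission
  imports Defs
begin

text \<open>A yesterday-edge into a world (v, t) of M[U] comes from M when t is a past state of U
  and from U otherwise.  History preservation makes the pairs reached by such steps satisfy
  their preconditions and makes past states epistemically trivial, so each property of M[U]
  reduces to the corresponding property of M (at past states) or of U (elsewhere).  For depth,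
  depth (v, t) = depth v + depth t: this sum strictly increases along yesterday-edges of M[U],
  which bounds the depth, and under history preservation it also drops by exactly one along
  some edge, which makes the bound exact.\<close>

lemma history_snoc:
  assumes "history Y xs" and "Y (last xs) x"
  shows "history Y (xs @ [x])"
proof -
  have "xs \<noteq> []" using assms(1) unfolding history_def progression_def by simp
  have "Y ((xs @ [x]) ! i) ((xs @ [x]) ! Suc i)" if "Suc i < length (xs @ [x])" for i
  proof (cases "Suc i < length xs")
    case True
    then show ?thesis using assms(1) unfolding history_def progression_def
      by (simp add: nth_append)
  next
    case False
    with that have "i = length xs - 1" by simp
    with assms(2) \<open>xs \<noteq> []\<close> show ?thesis by (simp add: nth_append last_conv_nth)
  qed
  then show ?thesis using assms(1) \<open>xs \<noteq> []\<close> unfolding history_def progression_def by simp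
qed

lemma history_butlast:
  assumes "history Y xs" and "length xs \<ge> 2"
  shows "history Y (butlast xs)" and "Y (last (butlast xs)) (last xs)"
proof -
  obtain ys z where xs: "xs = ys @ [z]" and "ys \<noteq> []"
    using assms(2) by (cases xs rule: rev_cases) (auto simp flip: length_greater_0_conv)
  have steps: "Y (xs ! i) (xs ! Suc i)" if "Suc i < length xs" for i
    using assms(1) that unfolding history_def progression_def by blast
  have "Y (ys ! i) (ys ! Suc i)" if "Suc i < length ys" for i
    using steps[of i] that by (simp add: xs nth_append)
  then show "history Y (butlast xs)"
    using assms(1) \<open>ys \<noteq> []\<close> unfolding history_def progression_def xs by simp
  show "Y (last (butlast xs)) (last xs)"
    using steps[of "length ys - 1"] \<open>ys \<noteq> []\<close> by (simp add: xs nth_append last_conv_nth)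
qed

lemma history_length_le_depth:
  assumes "history Y xs"
  shows "enat (length xs - 1) \<le> depth Y (last xs)"
proof -
  have "length xs - 1 \<in> hist_lengths Y (last xs)"
    using assms unfolding hist_lengths_def by blast
  then show ?thesis unfolding depth_def by auto
qed

lemma progression_rank_increase:
  assumes "progression Y xs" and rank: "\<And>a b. Y a b \<Longrightarrow> f a < (f b :: nat)"
    and "i < length xs"
  shows "f (xs ! 0) + i \<le> f (xs ! i)"
  using \<open>i < length xs\<close>
proof (induction i)
  case (Suc i)
  then have "Y (xs ! i) (xs ! Suc i)" using assms(1) unfolding progression_def by blast
  then have "f (xs ! i) < f (xs ! Suc i)" by (rule rank)
  with Suc show ?case by simp
qed simp

lemma history_exists_if_rank:
  assumes rank: "\<And>a b. Y a b \<Longrightarrow> f a < (f b :: nat)"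
  shows "\<exists>xs. history Y xs \<and> last xs = x"
proof (induction "f x" arbitrary: x rule: less_induct)
  case less
  show ?case
  proof (cases "\<exists>y. Y y x")
    case True
    then obtain y where "Y y x" by blast
    with less rank obtain xs where "history Y xs" "last xs = y" by blast
    with \<open>Y y x\<close> have "history Y (xs @ [x])" by (simp add: history_snoc)
    then show ?thesis by (intro exI[of _ "xs @ [x]"]) simp
  next
    case False
    then have "history Y [x]" unfolding history_def progression_def by simp
    then show ?thesis by (intro exI[of _ "[x]"]) simp
  qed
qed

lemma depth_le_rank:
  assumes rank: "\<And>a b. Y a b \<Longrightarrow> f a < (f b :: nat)"
  shows "depth Y x \<le> enat (f x)"
proof -
  have bounded: "hist_lengths Y x \<subseteq> {..f x}"
  proof
    fix n assume "n \<in> hist_lengths Y x"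
    then obtain xs where xs: "n = length xs - 1" "history Y xs" "last xs = x"
      unfolding hist_lengths_def by blast
    then have "xs \<noteq> []" and "progression Y xs" unfolding history_def progression_def by simp_all
    then have "f (xs ! 0) + (length xs - 1) \<le> f (xs ! (length xs - 1))"
      using progression_rank_increase[of Y xs f "length xs - 1", OF _ rank] by simp
    with xs \<open>xs \<noteq> []\<close> show "n \<in> {..f x}" by (simp add: last_conv_nth)
  qed
  have "hist_lengths Y x \<noteq> {}"
    using history_exists_if_rank[of Y f x, OF rank] unfolding hist_lengths_def by blast
  moreover have "finite (hist_lengths Y x)" using bounded finite_subset by blast
  ultimately show ?thesis
    using bounded unfolding depth_def by (simp add: Max_le_iff subset_eq)
qed

lemma depth_eq_rank:
  assumes rank: "\<And>a b. Y a b \<Longrightarrow> f a < (f b :: nat)"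
    and step: "\<And>b n. b \<in> S \<Longrightarrow> f b = Suc n \<Longrightarrow> \<exists>a\<in>S. Y a b \<and> f a = n"
    and "x \<in> S"
  shows "depth Y x = enat (f x)"
proof -
  have "\<exists>xs. history Y xs \<and> last xs = b \<and> f b \<le> length xs - 1" if "b \<in> S" for b
    using that
  proof (induction "f b" arbitrary: b)
    case 0
    then show ?case using history_exists_if_rank[of Y f b, OF rank] by simp
  next
    case (Suc n)
    then obtain a where "a \<in> S" "Y a b" "f a = n" using step[of b n] by auto
    with Suc.hyps obtain xs where xs: "history Y xs" "last xs = a" "n \<le> length xs - 1"
      by blast
    then have "xs \<noteq> []" unfolding history_def progression_def by simp
    have "history Y (xs @ [b])" using xs \<open>Y a b\<close> by (simp add: history_snoc)
    moreover have "f b \<le> length (xs @ [b]) - 1"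
      using xs(3) \<open>Suc n = f b\<close> \<open>xs \<noteq> []\<close> by (cases xs) auto
    ultimately show ?case by (intro exI[of _ "xs @ [b]"]) simp
  qed
  then obtain xs where "history Y xs" "last xs = x" "f x \<le> length xs - 1"
    using \<open>x \<in> S\<close> by blast
  then have "enat (f x) \<le> depth Y x"
    using history_length_le_depth[of Y xs] by (metis enat_ord_simps(1) order_trans)
  with depth_le_rank[of Y f x, OF rank] show ?thesis by (simp add: antisym)
qed

text \<open>Max of an empty or infinite set is unspecified: depth_nat is only meaningful where the
  depth is finite, and then agrees with it (depth_eq_depth_nat).\<close>

definition depth_nat :: "('a \<Rightarrow> 'a \<Rightarrow> bool) \<Rightarrow> 'a \<Rightarrow> nat" where
  "depth_nat Y x = Max (hist_lengths Y x)"

definition pair_depth_nat ::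
  "('a \<Rightarrow> 'a \<Rightarrow> bool) \<Rightarrow> ('b \<Rightarrow> 'b \<Rightarrow> bool) \<Rightarrow> 'a \<times> 'b \<Rightarrow> nat" where
  "pair_depth_nat Y Z x = depth_nat Y (fst x) + depth_nat Z (snd x)"

locale depth_defined_rel =
  fixes S :: "'a set" and Y :: "'a \<Rightarrow> 'a \<Rightarrow> bool"
  assumes depth_defined: "depth_defined S Y"
    and yesterday_in: "Y a b \<Longrightarrow> a \<in> S \<and> b \<in> S"
begin

lemma hist_lengths_finite_nonempty:
  assumes "x \<in> S"
  shows "finite (hist_lengths Y x)" and "hist_lengths Y x \<noteq> {}"
  using depth_defined assms unfolding depth_defined_def depth_def by (auto split: if_splits)

lemma depth_eq_depth_nat: "x \<in> S \<Longrightarrow> depth Y x = enat (depth_nat Y x)"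
  using hist_lengths_finite_nonempty unfolding depth_def depth_nat_def by simp

lemma history_of_depth_nat:
  assumes "x \<in> S"
  obtains xs where "history Y xs" "last xs = x" "length xs - 1 = depth_nat Y x"
proof -
  have "depth_nat Y x \<in> hist_lengths Y x"
    using hist_lengths_finite_nonempty[OF assms] unfolding depth_nat_def by simp
  then show ?thesis using that unfolding hist_lengths_def by auto
qed

lemma depth_nat_less:
  assumes "Y a b"
  shows "depth_nat Y a < depth_nat Y b"
proof -
  obtain xs where xs: "history Y xs" "last xs = a" "length xs - 1 = depth_nat Y a"
    using history_of_depth_nat yesterday_in[OF assms] by blast
  then have "xs \<noteq> []" unfolding history_def progression_def by simp
  have "history Y (xs @ [b])" using xs assms by (simp add: history_snoc)
  then have "enat (length xs) \<le> depth Y b"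
    using history_length_le_depth[of Y "xs @ [b]"] by simp
  then have "length xs \<le> depth_nat Y b"
    using depth_eq_depth_nat yesterday_in[OF assms] by simp
  with xs(3) \<open>xs \<noteq> []\<close> show ?thesis by (cases xs) auto
qed

lemma depth_nat_Suc_yesterday:
  assumes "b \<in> S" and "depth_nat Y b = Suc n"
  obtains a where "a \<in> S" "Y a b" "depth_nat Y a = n"
proof -
  obtain xs where xs: "history Y xs" "last xs = b" "length xs - 1 = Suc n"
    using history_of_depth_nat[OF assms(1)] assms(2) by metis
  define a where "a = last (butlast xs)"
  have "length xs \<ge> 2" using xs(3) by simp
  then have "history Y (butlast xs)" and "Y a b"
    using history_butlast[OF xs(1)] xs(2) unfolding a_def by simp_all
  then have "a \<in> S" using yesterday_in by blast
  have "length (butlast xs) - 1 = n" using xs(3) by simp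
  then have "enat n \<le> depth Y a"
    using history_length_le_depth[OF \<open>history Y (butlast xs)\<close>] unfolding a_def by simp
  then have "n \<le> depth_nat Y a" using depth_eq_depth_nat[OF \<open>a \<in> S\<close>] by simp
  moreover have "depth_nat Y a < Suc n" using depth_nat_less[OF \<open>Y a b\<close>] assms(2) by simp
  ultimately show ?thesis using that \<open>a \<in> S\<close> \<open>Y a b\<close> by simp
qed

lemma depth_nat_eq_0_iff:
  assumes "b \<in> S"
  shows "depth_nat Y b = 0 \<longleftrightarrow> \<not> (\<exists>a. Y a b)"
  using depth_nat_less depth_nat_Suc_yesterday[OF assms] by (metis not0_implies_Suc not_less0)

end

lemma kripke_yrel_in_worlds: "kripke M \<Longrightarrow> yrel M u v \<Longrightarrow> u \<in> worlds M \<and> v \<in> worlds M"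
  unfolding kripke_def by blast

lemma action_model_ayrel_in_events:
  "action_model U \<Longrightarrow> ayrel U s t \<Longrightarrow> s \<in> events U \<and> t \<in> events U"
  unfolding action_model_def by blast

lemma valid_imp_sat:
  fixes M :: "('w \<times> nat list, 'ag, 'p) kmodel"
  assumes "valid TYPE('w) \<phi>" and "kripke M" and "w \<in> worlds M"
  shows "sat \<phi> M w"
  using assms unfolding valid_def by blast

context
  fixes M :: "('w \<times> nat list, 'ag, 'p) kmodel" and U :: "('ag, 'p) amodel"
  assumes kripke: "kripke M" and action_model: "action_model U"
begin

lemma mem_worlds_product:
  "(v, t) \<in> worlds (product M U) \<longleftrightarrow> v \<in> worlds M \<and> t \<in> events U \<and> sat (pre U t) M v"
  unfolding product_def prod_gen_def Let_def by simp

lemma rel_product: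
  "rel (product M U) a x y \<longleftrightarrow> x \<in> worlds (product M U) \<and> y \<in> worlds (product M U)
     \<and> rel M a (fst x) (fst y) \<and> arel U a (snd x) (snd y)"
  unfolding product_def prod_gen_def Let_def by simp

lemma yrel_product_past:
  assumes "past_state (ayrel U) t"
  shows "yrel (product M U) x' (v, t) \<longleftrightarrow> x' \<in> worlds (product M U)
     \<and> (v, t) \<in> worlds (product M U) \<and> snd x' = t \<and> yrel M (fst x') v"
  using assms unfolding product_def prod_gen_def Let_def past_state_def by auto

lemma yrel_product_not_past:
  assumes "\<not> past_state (ayrel U) t"
  shows "yrel (product M U) x' (v, t) \<longleftrightarrow> x' \<in> worlds (product M U)
     \<and> (v, t) \<in> worlds (product M U) \<and> fst x' = v \<and> ayrel U (snd x') t"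
  using assms unfolding product_def prod_gen_def Let_def by auto

lemma yrel_product_in_worlds:
  "yrel (product M U) x' x \<Longrightarrow> x' \<in> worlds (product M U) \<and> x \<in> worlds (product M U)"
  unfolding product_def prod_gen_def Let_def by simp

lemma persistence_product: "persistence M \<Longrightarrow> persistence (product M U)"
  unfolding persistence_def product_def prod_gen_def Let_def by auto

lemma unique_past_product:
  assumes M: "unique_past (worlds M) (yrel M)" and U: "unique_past (events U) (ayrel U)"
  shows "unique_past (worlds (product M U)) (yrel (product M U))"
  unfolding unique_past_def
proof (intro allI impI, elim conjE)
  fix x x' x'' assume x': "yrel (product M U) x' x" and x'': "yrel (product M U) x'' x"
  obtain v t where x: "x = (v, t)" by fastforce
  show "x' = x''"
  proof (cases "past_state (ayrel U) t")
    case True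
    then have "snd x' = snd x''" "yrel M (fst x') v" "yrel M (fst x'') v"
      using x' x'' by (simp_all add: x yrel_product_past)
    moreover from this have "fst x' = fst x''"
      using M kripke_yrel_in_worlds[OF kripke] unfolding unique_past_def by blast
    ultimately show ?thesis by (simp add: prod_eq_iff)
  next
    case False
    then have "fst x' = fst x''" "ayrel U (snd x') t" "ayrel U (snd x'') t"
      using x' x'' by (simp_all add: x yrel_product_not_past)
    moreover from this have "snd x' = snd x''"
      using U action_model_ayrel_in_events[OF action_model] unfolding unique_past_def by blast
    ultimately show ?thesis by (simp add: prod_eq_iff)
  qed
qed

lemma depth_defined_rel_worlds:
  "depth_defined (worlds M) (yrel M) \<Longrightarrow> depth_defined_rel (worlds M) (yrel M)"
  using kripke_yrel_in_worlds[OF kripke] by unfold_locales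

lemma depth_defined_rel_events:
  "depth_defined (events U) (ayrel U) \<Longrightarrow> depth_defined_rel (events U) (ayrel U)"
  using action_model_ayrel_in_events[OF action_model] by unfold_locales

lemma pair_depth_nat_less_if_yrel_product:
  assumes M: "depth_defined (worlds M) (yrel M)" and U: "depth_defined (events U) (ayrel U)"
    and "yrel (product M U) x' x"
  shows "pair_depth_nat (yrel M) (ayrel U) x' < pair_depth_nat (yrel M) (ayrel U) x"
proof -
  interpret M: depth_defined_rel "worlds M" "yrel M" by (rule depth_defined_rel_worlds[OF M])
  interpret U: depth_defined_rel "events U" "ayrel U" by (rule depth_defined_rel_events[OF U])
  obtain v t where x: "x = (v, t)" by fastforce
  show ?thesis
  proof (cases "past_state (ayrel U) t")
    case True
    then have "snd x' = t" "yrel M (fst x') v"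
      using assms(3) by (simp_all add: x yrel_product_past)
    then show ?thesis using M.depth_nat_less by (simp add: x pair_depth_nat_def)
  next
    case False
    then have "fst x' = v" "ayrel U (snd x') t"
      using assms(3) by (simp_all add: x yrel_product_not_past)
    then show ?thesis using U.depth_nat_less by (simp add: x pair_depth_nat_def)
  qed
qed

lemma depth_defined_product:
  assumes "depth_defined (worlds M) (yrel M)" and "depth_defined (events U) (ayrel U)"
  shows "depth_defined (worlds (product M U)) (yrel (product M U))"
  unfolding depth_defined_def
  using depth_le_rank[of "yrel (product M U)" "pair_depth_nat (yrel M) (ayrel U)"]
    pair_depth_nat_less_if_yrel_product[OF assms] by (metis infinity_ileE)

context
  assumes hp: "history_preserving TYPE('w) U"
begin

lemma arel_from_past_state:
  assumes "past_state (ayrel U) s" and "s \<in> events U"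
  shows "arel U a s t \<longleftrightarrow> t = s"
  using hp assms unfolding history_preserving_def epistemic_past_state_def by blast

lemma event_yesterday_in_product:
  assumes "(v, t) \<in> worlds (product M U)" and "ayrel U t' t"
  shows "(v, t') \<in> worlds (product M U)" and "yrel (product M U) (v, t') (v, t)"
proof -
  have "sat (Imp (pre U t) (pre U t')) M v"
    using hp assms valid_imp_sat[OF _ kripke] unfolding history_preserving_def
    by (simp add: mem_worlds_product)
  then show "(v, t') \<in> worlds (product M U)"
    using assms action_model_ayrel_in_events[OF action_model]
    by (simp add: mem_worlds_product Imp_def)
  with assms show "yrel (product M U) (v, t') (v, t)"
    unfolding product_def prod_gen_def Let_def by simp
qed

lemma world_yesterday_in_product:
  assumes "(v, t) \<in> worlds (product M U)" and "past_state (ayrel U) t" and "yrel M v' v"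
  shows "(v', t) \<in> worlds (product M U)" and "yrel (product M U) (v', t) (v, t)"
proof -
  have "v' \<in> worlds M" using kripke_yrel_in_worlds[OF kripke assms(3)] by simp
  moreover have "t \<in> events U" using assms(1) by (simp add: mem_worlds_product)
  ultimately have "sat (pre U t) M v'"
    using hp assms(2) valid_imp_sat[OF _ kripke]
    unfolding history_preserving_def epistemic_past_state_def by blast
  then show "(v', t) \<in> worlds (product M U)"
    using \<open>v' \<in> worlds M\<close> \<open>t \<in> events U\<close> by (simp add: mem_worlds_product)
  with assms show "yrel (product M U) (v', t) (v, t)"
    by (simp add: yrel_product_past)
qed

lemma knowledge_past_product:
  assumes M: "knowledge_past (worlds M) (rel M) (yrel M)"
    and U: "knowledge_past (events U) (arel U) (ayrel U)"
  shows "knowledge_past (worlds (product M U)) (rel (product M U)) (yrel (product M U))"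
  unfolding knowledge_past_def
proof (intro allI impI, elim conjE)
  fix a x x' y assume x': "yrel (product M U) x' x" and xy: "rel (product M U) a x y"
  obtain w s where x: "x = (w, s)" by fastforce
  obtain v t where y: "y = (v, t)" by fastforce
  have y_in: "(v, t) \<in> worlds (product M U)" using xy by (simp add: rel_product y)
  show "\<exists>y'\<in>worlds (product M U). yrel (product M U) y' y"
  proof (cases "past_state (ayrel U) s")
    case True
    moreover have "s \<in> events U" "arel U a s t"
      using xy by (simp_all add: rel_product x y mem_worlds_product)
    ultimately have "t = s" using arel_from_past_state by blast
    have "yrel M (fst x') w" using x' True by (simp add: x yrel_product_past)
    moreover have "rel M a w v" "v \<in> worlds M"
      using xy by (simp_all add: rel_product x y mem_worlds_product)
    ultimately obtain v' where "yrel M v' v"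
      using M kripke_yrel_in_worlds[OF kripke] unfolding knowledge_past_def by blast
    then show ?thesis
      using world_yesterday_in_product y_in True \<open>t = s\<close> y by blast
  next
    case False
    then have "ayrel U (snd x') s" using x' by (simp add: x yrel_product_not_past)
    moreover have "arel U a s t" "t \<in> events U"
      using xy by (simp_all add: rel_product x y mem_worlds_product)
    ultimately obtain t' where "ayrel U t' t"
      using U action_model_ayrel_in_events[OF action_model] unfolding knowledge_past_def by blast
    then show ?thesis using event_yesterday_in_product y_in y by blast
  qed
qed

lemma knowledge_initial_product:
  assumes M: "knowledge_initial (worlds M) (rel M) (yrel M)"
  shows "knowledge_initial (worlds (product M U)) (rel (product M U)) (yrel (product M U))"
  unfolding knowledge_initial_def
proof (intro allI impI, elim conjE)
  fix a x y assume xy: "rel (product M U) a x y"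
    and initial: "\<not> (\<exists>x'\<in>worlds (product M U). yrel (product M U) x' x)"
  obtain w s where x: "x = (w, s)" by fastforce
  obtain v t where y: "y = (v, t)" by fastforce
  have x_in: "(w, s) \<in> worlds (product M U)" and "rel M a w v" "arel U a s t"
    and "w \<in> worlds M" "v \<in> worlds M"
    using xy by (simp_all add: rel_product x y mem_worlds_product)
  have "past_state (ayrel U) s"
    using event_yesterday_in_product[OF x_in] initial unfolding past_state_def x by blast
  have "\<not> (\<exists>w'\<in>worlds M. yrel M w' w)"
    using world_yesterday_in_product[OF x_in \<open>past_state (ayrel U) s\<close>] initial x by blast
  then have "\<not> (\<exists>v'\<in>worlds M. yrel M v' v)"
    using M \<open>rel M a w v\<close> \<open>w \<in> worlds M\<close> \<open>v \<in> worlds M\<close>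
    unfolding knowledge_initial_def by blast
  moreover have "t = s"
    using arel_from_past_state[OF \<open>past_state (ayrel U) s\<close>] \<open>arel U a s t\<close> x_in
    by (simp add: mem_worlds_product)
  ultimately show "\<not> (\<exists>y'\<in>worlds (product M U). yrel (product M U) y' y)"
    using \<open>past_state (ayrel U) s\<close> kripke_yrel_in_worlds[OF kripke]
    by (simp add: y yrel_product_past) blast
qed

lemma perfect_recall_product:
  assumes M: "perfect_recall (worlds M) (rel M) (yrel M)"
    and U: "perfect_recall (events U) (arel U) (ayrel U)"
  shows "perfect_recall (worlds (product M U)) (rel (product M U)) (yrel (product M U))"
  unfolding perfect_recall_def
proof (intro allI impI, elim conjE)
  fix a x y y' assume xy: "yrel (product M U) x y" and yy': "rel (product M U) a y y'"
  obtain w s where x: "x = (w, s)" by fastforce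
  obtain v t where y: "y = (v, t)" by fastforce
  obtain v' t' where y': "y' = (v', t')" by fastforce
  have x_in: "(w, s) \<in> worlds (product M U)" using yrel_product_in_worlds[OF xy] x by simp
  have y_in: "(v, t) \<in> worlds (product M U)" and y'_in: "(v', t') \<in> worlds (product M U)"
    and "rel M a v v'" "arel U a t t'" and "v \<in> worlds M" "v' \<in> worlds M" "t' \<in> events U"
    using yy' by (simp_all add: rel_product y y' mem_worlds_product)
  show "\<exists>x'\<in>worlds (product M U). rel (product M U) a x x' \<and> yrel (product M U) x' y'"
  proof (cases "past_state (ayrel U) t")
    case True
    then have "t' = t" and "arel U a t t"
      using arel_from_past_state \<open>arel U a t t'\<close> y_in by (simp_all add: mem_worlds_product)
    have "s = t" and "yrel M w v" using xy True by (simp_all add: x y yrel_product_past)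
    then obtain w' where "rel M a w w'" "yrel M w' v'"
      using M \<open>rel M a v v'\<close> \<open>v \<in> worlds M\<close> \<open>v' \<in> worlds M\<close> kripke_yrel_in_worlds[OF kripke]
      unfolding perfect_recall_def by blast
    with world_yesterday_in_product[of v' t w'] y'_in True \<open>t' = t\<close>
    have "(w', t) \<in> worlds (product M U)" "yrel (product M U) (w', t) y'" by (simp_all add: y')
    moreover have "rel (product M U) a x (w', t)"
      using calculation x_in \<open>rel M a w w'\<close> \<open>arel U a t t\<close> \<open>s = t\<close> by (simp add: rel_product x)
    ultimately show ?thesis by blast
  next
    case False
    then have "w = v" and "ayrel U s t" using xy by (simp_all add: x y yrel_product_not_past)
    then obtain s' where "arel U a s s'" "ayrel U s' t'"
      using U \<open>arel U a t t'\<close> \<open>t' \<in> events U\<close> action_model_ayrel_in_events[OF action_model]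
      unfolding perfect_recall_def by blast
    with event_yesterday_in_product[of v' t' s'] y'_in
    have "(v', s') \<in> worlds (product M U)" "yrel (product M U) (v', s') y'" by (simp_all add: y')
    moreover have "rel (product M U) a x (v', s')"
      using calculation x_in \<open>rel M a v v'\<close> \<open>arel U a s s'\<close> \<open>w = v\<close> by (simp add: rel_product x)
    ultimately show ?thesis by blast
  qed
qed

lemma depth_product:
  assumes M: "depth_defined (worlds M) (yrel M)" and U: "depth_defined (events U) (ayrel U)"
    and "x \<in> worlds (product M U)"
  shows "depth (yrel (product M U)) x = enat (pair_depth_nat (yrel M) (ayrel U) x)"
proof (rule depth_eq_rank[OF pair_depth_nat_less_if_yrel_product[OF M U] _ assms(3)])
  interpret M: depth_defined_rel "worlds M" "yrel M" by (rule depth_defined_rel_worlds[OF M])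
  interpret U: depth_defined_rel "events U" "ayrel U" by (rule depth_defined_rel_events[OF U])
  fix y n
  assume y_in: "y \<in> worlds (product M U)"
    and rank: "pair_depth_nat (yrel M) (ayrel U) y = Suc n"
  obtain v t where y: "y = (v, t)" by fastforce
  have "v \<in> worlds M" "t \<in> events U" using y_in by (simp_all add: y mem_worlds_product)
  show "\<exists>y'\<in>worlds (product M U). yrel (product M U) y' y
    \<and> pair_depth_nat (yrel M) (ayrel U) y' = n"
  proof (cases "past_state (ayrel U) t")
    case True
    then have "depth_nat (ayrel U) t = 0"
      using U.depth_nat_eq_0_iff[OF \<open>t \<in> events U\<close>] unfolding past_state_def by blast
    with rank have "depth_nat (yrel M) v = Suc n" by (simp add: y pair_depth_nat_def)
    then obtain v' where "yrel M v' v" "depth_nat (yrel M) v' = n"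
      using M.depth_nat_Suc_yesterday[OF \<open>v \<in> worlds M\<close>] by blast
    moreover note world_yesterday_in_product[OF y_in[unfolded y] True \<open>yrel M v' v\<close>]
    ultimately show ?thesis
      using \<open>depth_nat (ayrel U) t = 0\<close> by (auto simp: y pair_depth_nat_def)
  next
    case False
    then have "depth_nat (ayrel U) t \<noteq> 0"
      using U.depth_nat_eq_0_iff[OF \<open>t \<in> events U\<close>] unfolding past_state_def by blast
    then obtain m where m: "depth_nat (ayrel U) t = Suc m" using not0_implies_Suc by blast
    then obtain t' where "ayrel U t' t" "depth_nat (ayrel U) t' = m"
      using U.depth_nat_Suc_yesterday[OF \<open>t \<in> events U\<close>] by blast
    moreover note event_yesterday_in_product[OF y_in[unfolded y] \<open>ayrel U t' t\<close>]
    ultimately show ?thesis using rank m by (auto simp: y pair_depth_nat_def)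
  qed
qed

lemma synchronous_product:
  assumes M: "synchronous (worlds M) (rel M) (yrel M)"
    and U: "synchronous (events U) (arel U) (ayrel U)"
  shows "synchronous (worlds (product M U)) (rel (product M U)) (yrel (product M U))"
proof -
  have dM: "depth_defined (worlds M) (yrel M)" and dU: "depth_defined (events U) (ayrel U)"
    using M U unfolding synchronous_def by simp_all
  interpret M: depth_defined_rel "worlds M" "yrel M" by (rule depth_defined_rel_worlds[OF dM])
  interpret U: depth_defined_rel "events U" "ayrel U" by (rule depth_defined_rel_events[OF dU])
  have "depth (yrel (product M U)) x = depth (yrel (product M U)) y"
    if xy: "rel (product M U) a x y" for a x y
  proof -
    obtain w s where x: "x = (w, s)" by fastforce
    obtain v t where y: "y = (v, t)" by fastforce
    have in_MU: "x \<in> worlds (product M U)" "y \<in> worlds (product M U)"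
      and "rel M a w v" "arel U a s t"
      and "w \<in> worlds M" "v \<in> worlds M" "s \<in> events U" "t \<in> events U"
      using xy by (simp_all add: rel_product x y mem_worlds_product)
    have "depth (yrel M) w = depth (yrel M) v"
      using M \<open>rel M a w v\<close> \<open>w \<in> worlds M\<close> \<open>v \<in> worlds M\<close>
      unfolding synchronous_def by blast
    moreover have "depth (ayrel U) s = depth (ayrel U) t"
      using U \<open>arel U a s t\<close> \<open>s \<in> events U\<close> \<open>t \<in> events U\<close>
      unfolding synchronous_def by blast
    ultimately have "pair_depth_nat (yrel M) (ayrel U) x = pair_depth_nat (yrel M) (ayrel U) y"
      using \<open>w \<in> worlds M\<close> \<open>v \<in> worlds M\<close> \<open>s \<in> events U\<close> \<open>t \<in> events U\<close>
      by (simp add: x y pair_depth_nat_def M.depth_eq_depth_nat U.depth_eq_depth_nat)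
    then show ?thesis using depth_product[OF dM dU] in_MU by simp
  qed
  then show ?thesis
    unfolding synchronous_def using depth_defined_product[OF dM dU] by blast
qed

end

end

text \<open>The hypotheses on w0 and s0 only make M[U] nonempty; none of the properties needs them.\<close>

theorem theorem19:
  fixes M :: "('w \<times> nat list, 'ag :: finite, 'p) kmodel"
    and U :: "('ag, 'p) amodel"
  assumes "kripke M" and "action_model U"
    and "w0 \<in> worlds M" and "s0 \<in> events U" and "sat (pre U s0) M w0"
  defines "MU \<equiv> product M U"
  shows
   "(persistence M \<longrightarrow> persistence MU)
  \<and> (depth_defined (worlds M) (yrel M) \<and> depth_defined (events U) (ayrel U)
       \<longrightarrow> depth_defined (worlds MU) (yrel MU))
  \<and> (knowledge_past (worlds M) (rel M) (yrel M) \<and> knowledge_past (events U) (arel U) (ayrel U)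
       \<and> history_preserving TYPE('w) U
       \<longrightarrow> knowledge_past (worlds MU) (rel MU) (yrel MU))
  \<and> (knowledge_initial (worlds M) (rel M) (yrel M) \<and> history_preserving TYPE('w) U
       \<longrightarrow> knowledge_initial (worlds MU) (rel MU) (yrel MU))
  \<and> (unique_past (worlds M) (yrel M) \<and> unique_past (events U) (ayrel U)
       \<longrightarrow> unique_past (worlds MU) (yrel MU))
  \<and> (perfect_recall (worlds M) (rel M) (yrel M) \<and> perfect_recall (events U) (arel U) (ayrel U)
       \<and> history_preserving TYPE('w) U
       \<longrightarrow> perfect_recall (worlds MU) (rel MU) (yrel MU))
  \<and> (synchronous (worlds M) (rel M) (yrel M) \<and> synchronous (events U) (arel U) (ayrel U)
       \<and> history_preserving TYPE('w) U
       \<longrightarrow> synchronous (worlds MU) (rel MU) (yrel MU))"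
  unfolding MU_def
  using persistence_product[OF assms(1,2)] depth_defined_product[OF assms(1,2)]
    knowledge_past_product[OF assms(1,2)] knowledge_initial_product[OF assms(1,2)]
    unique_past_product[OF assms(1,2)] perfect_recall_product[OF assms(1,2)]
    synchronous_product[OF assms(1,2)]
  by blast

end
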